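(* Let $T>0$ and let $\mathcal F(t,r)$ be continuous on $[0,T]\times(0,\infty)$ with $|\mathcal F(t,r)|\le\frac{C\varepsilon^2}{1+r^2+t^2}$. There is $c>0$ such that for any $\delta\in(0,1)$ with $\varepsilon\le c\delta^2$ and any fixed $\ell>0$: if $(\theta(t),a(t))$, $t\in[0,T]$, $a(t)>0$, solves $\dot\theta=-\lambda\mathcal F(t,\tilde R)\partial_a\tilde R$, $\dot a=\lambda\mathcal F(t,\tilde R)\partial_\theta\tilde R$ with $\tilde R=R(\theta+at,a,\ell)$ and $(\theta(0),a(0),\ell)\in\mathcal D(\delta)$, then $(\theta(t),a(t),\ell)\in\mathcal D(\delta/2)$ for all $t\in[0,T]$.
   Context: Fix $m>0$, $\lambda>0$. For $a,\ell>0$: $\kappa=(1+4a^2\ell/m^2)^{-1/2}$, $p=\frac{m}{2a^2\kappa}$; $G_\kappa(x)=\sqrt{x^2-1}-\kappa\ln(x+\sqrt{x^2-1})$ on $[1,\infty)$, $H_\kappa=G_\kappa^{-1}$; $R(\theta,a,\ell)=pH_\kappa(|\theta|/p)-p\kappa$; $\partial_\theta\tilde R,\partial_a\tilde R$ are the partial derivatives of $(\theta,a)\mapsto R(\theta+at,a,\ell)$. $\mathcal D(\delta)=\{(\theta,a,\ell)\in\mathbb R\times(0,\infty)^2: a\langle\ell\rangle^{1/2}\ge\delta\}$, $\langle x\rangle=(2+|x|^2)^{1/2}$. *)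

theory Defs
  imports "HOL-Analysis.Analysis"
begin

definition kappa :: "real \<Rightarrow> real \<Rightarrow> real \<Rightarrow> real" where
  "kappa m a l = 1 / sqrt (1 + 4 * a\<^sup>2 * l / m\<^sup>2)"

definition pp :: "real \<Rightarrow> real \<Rightarrow> real \<Rightarrow> real" where
  "pp m a l = m / (2 * a\<^sup>2 * kappa m a l)"

definition Gk :: "real \<Rightarrow> real \<Rightarrow> real" where
  "Gk k x = sqrt (x\<^sup>2 - 1) - k * ln (x + sqrt (x\<^sup>2 - 1))"

definition Hk :: "real \<Rightarrow> real \<Rightarrow> real" where
  "Hk k y = (THE x. 1 \<le> x \<and> Gk k x = y)"

definition RR :: "real \<Rightarrow> real \<Rightarrow> real \<Rightarrow> real \<Rightarrow> real" where
  "RR m \<theta> a l = pp m a l * Hk (kappa m a l) (\<bar>\<theta>\<bar> / pp m a l) - pp m a l * kappa m a l"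

definition Rtil :: "real \<Rightarrow> real \<Rightarrow> real \<Rightarrow> real \<Rightarrow> real \<Rightarrow> real" where
  "Rtil m l t \<theta> a = RR m (\<theta> + a * t) a l"

definition dth_Rtil :: "real \<Rightarrow> real \<Rightarrow> real \<Rightarrow> real \<Rightarrow> real \<Rightarrow> real" where
  "dth_Rtil m l t \<theta> a = deriv (\<lambda>\<theta>'. Rtil m l t \<theta>' a) \<theta>"

definition da_Rtil :: "real \<Rightarrow> real \<Rightarrow> real \<Rightarrow> real \<Rightarrow> real \<Rightarrow> real" where
  "da_Rtil m l t \<theta> a = deriv (\<lambda>a'. Rtil m l t \<theta> a') a"

definition jbr :: "real \<Rightarrow> real" where
  "jbr x = sqrt (2 + x\<^sup>2)"

definition DD :: "real \<Rightarrow> (real \<times> real \<times> real) set" where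
  "DD \<delta> = {(\<theta>, a, l). 0 < a \<and> 0 < l \<and> a * sqrt (jbr l) \<ge> \<delta>}"

end

theory Submission
  imports Defs
begin

text \<open>
  Write R = p (cosh \<xi> - \<kappa>), where \<xi> solves the hyperbolic Kepler equation
  sinh \<xi> - \<kappa> \<xi> = \<theta> / p. Then R is a C^1 function of (\<theta>, a), R \<ge> Rmin a = p (1 - \<kappa>) with
  equality exactly at \<theta> = 0, and \<partial>R/\<partial>\<theta> has the sign of \<theta>. Along the flow, with s = \<theta> + a t,
  the \<partial>R/\<partial>a terms cancel and d/dt R(s, a) = a \<partial>R/\<partial>\<theta>. Hence, with E = \<lambda> C \<epsilon>^2, the function
  V = a^2 + 4 E sgn s (arctan R(s, a) - arctan (Rmin a)) is nondecreasing: the forcing terms,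
  in (a^2)' and in arctan (Rmin a), are each at most half of the gain 4 E a |\<partial>R/\<partial>\<theta>| / (1 + R^2)
  of the arctan R term. That term is bounded by \<pi>/2 - arctan (Rmin (a 0)) \<le> min 2 (m/l + a 0/\<surd>l)
  once a has dropped below a 0, so \<epsilon> \<le> c \<delta>^2 forces (a t)^2 \<ge> (a 0)^2 / 4.
\<close>

section \<open>The hyperbolic Kepler equation\<close>

lemma sinh_diff_ge:
  fixes x y :: real
  assumes "x \<le> y"
  shows "y - x \<le> sinh y - sinh x"
proof -
  have "(\<lambda>z. z - sinh z) y \<le> (\<lambda>z. z - sinh z) x"
  proof (rule DERIV_nonpos_imp_nonincreasing[OF assms])
    fix z
    show "\<exists>d. ((\<lambda>z. z - sinh z) has_real_derivative d) (at z) \<and> d \<le> 0"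
      using cosh_real_ge_1[of z] by (intro exI[of _ "1 - cosh z"]) (auto intro!: derivative_eq_intros)
  qed
  then show ?thesis by simp
qed

lemma sinh_minus_linear_diff_ge:
  fixes k x y :: real
  assumes "x \<le> y"
  shows "(1 - k) * (y - x) \<le> (sinh y - k * y) - (sinh x - k * x)"
  using sinh_diff_ge[OF assms] by (simp add: algebra_simps)

lemma sinh_minus_linear_strict_mono:
  fixes k :: real
  assumes "k < 1"
  shows "strict_mono (\<lambda>\<xi>. sinh \<xi> - k * \<xi>)"
proof (rule strict_monoI)
  fix x y :: real
  assume "x < y"
  then have "0 < (1 - k) * (y - x)" using assms by simp
  then show "sinh x - k * x < sinh y - k * y"
    using sinh_minus_linear_diff_ge[of x y k] \<open>x < y\<close> by linarith
qed

lemma sinh_minus_linear_surj: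
  fixes k y :: real
  assumes "k < 1"
  shows "\<exists>\<xi>. sinh \<xi> - k * \<xi> = y"
proof -
  define b where "b = \<bar>y\<bar> / (1 - k)"
  have "0 \<le> b" using assms by (simp add: b_def)
  have "(1 - k) * b = \<bar>y\<bar>" using assms by (simp add: b_def)
  then have "y \<le> sinh b - k * b" "sinh (-b) - k * (-b) \<le> y"
    using sinh_minus_linear_diff_ge[of 0 b k] sinh_minus_linear_diff_ge[of "-b" 0 k] \<open>0 \<le> b\<close>
    by auto
  moreover have "-b \<le> b" using \<open>0 \<le> b\<close> by simp
  moreover have "\<forall>\<xi>. -b \<le> \<xi> \<and> \<xi> \<le> b \<longrightarrow> isCont (\<lambda>\<xi>. sinh \<xi> - k * \<xi>) \<xi>"
    by (auto intro!: continuous_intros)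
  ultimately show ?thesis
    using IVT[of "\<lambda>\<xi>. sinh \<xi> - k * \<xi>" "-b" y b] by blast
qed

definition hyp_anomaly :: "real \<Rightarrow> real \<Rightarrow> real" where
  "hyp_anomaly k y = (THE \<xi>. sinh \<xi> - k * \<xi> = y)"

lemma hyp_anomaly_eq_iff:
  assumes "k < 1"
  shows "hyp_anomaly k y = \<xi> \<longleftrightarrow> sinh \<xi> - k * \<xi> = y"
proof -
  obtain \<xi>\<^sub>0 where \<xi>\<^sub>0: "sinh \<xi>\<^sub>0 - k * \<xi>\<^sub>0 = y"
    using sinh_minus_linear_surj[OF assms] by blast
  have unique: "\<eta> = \<xi>\<^sub>0" if "sinh \<eta> - k * \<eta> = y" for \<eta>
  proof -
    have "(\<lambda>\<xi>. sinh \<xi> - k * \<xi>) \<eta> = (\<lambda>\<xi>. sinh \<xi> - k * \<xi>) \<xi>\<^sub>0"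
      using that \<xi>\<^sub>0 by simp
    then show ?thesis
      by (simp only: strict_mono_eq[OF sinh_minus_linear_strict_mono[OF assms]])
  qed
  have "hyp_anomaly k y = \<xi>\<^sub>0"
    unfolding hyp_anomaly_def using \<xi>\<^sub>0 unique by (rule the_equality)
  then show ?thesis using \<xi>\<^sub>0 unique[of \<xi>] by auto
qed

lemma sinh_hyp_anomaly:
  "k < 1 \<Longrightarrow> sinh (hyp_anomaly k y) - k * hyp_anomaly k y = y"
  using hyp_anomaly_eq_iff by blast

lemma hyp_anomaly_uminus: "k < 1 \<Longrightarrow> hyp_anomaly k (- y) = - hyp_anomaly k y"
  using sinh_hyp_anomaly[of k y] by (simp add: hyp_anomaly_eq_iff)

lemma hyp_anomaly_zero: "k < 1 \<Longrightarrow> hyp_anomaly k 0 = 0"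
  by (simp add: hyp_anomaly_eq_iff)

lemma sgn_hyp_anomaly:
  assumes "k < 1"
  shows "sgn (hyp_anomaly k y) = sgn y"
proof -
  define \<xi> where "\<xi> = hyp_anomaly k y"
  have "y = sinh \<xi> - k * \<xi>" using sinh_hyp_anomaly[OF assms] by (simp add: \<xi>_def)
  also have "sgn \<dots> = sgn \<xi>"
    using strict_mono_less[OF sinh_minus_linear_strict_mono[OF assms], of 0 \<xi>]
      strict_mono_less[OF sinh_minus_linear_strict_mono[OF assms], of \<xi> 0]
    by (cases "\<xi>" "0::real" rule: linorder_cases) auto
  finally show ?thesis by (simp add: \<xi>_def)
qed

lemma Gk_cosh: "0 \<le> \<eta> \<Longrightarrow> Gk k (cosh \<eta>) = sinh \<eta> - k * \<eta>"
  by (simp add: Gk_def cosh_square_eq cosh_plus_sinh)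

lemma Hk_eq_cosh_hyp_anomaly:
  assumes "k < 1" "0 \<le> y"
  shows "Hk k y = cosh (hyp_anomaly k y)"
  unfolding Hk_def
proof (rule the_equality)
  have "0 \<le> hyp_anomaly k y"
    using sgn_hyp_anomaly[OF assms(1), of y] assms(2) by (auto simp: sgn_if split: if_splits)
  then show "1 \<le> cosh (hyp_anomaly k y) \<and> Gk k (cosh (hyp_anomaly k y)) = y"
    using Gk_cosh sinh_hyp_anomaly[OF assms(1)] cosh_real_ge_1 by simp
next
  fix x
  assume x: "1 \<le> x \<and> Gk k x = y"
  then have "sinh (arcosh x) - k * arcosh x = y"
    using Gk_cosh[of "arcosh x" k] by simp
  then have "hyp_anomaly k y = arcosh x" using hyp_anomaly_eq_iff[OF assms(1)] by blast
  then show "x = cosh (hyp_anomaly k y)" using x by simp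
qed

lemma has_derivative_hyp_anomaly_at:
  fixes k y :: real
  assumes "k < 1"
  defines "\<xi> \<equiv> hyp_anomaly k y"
  shows "((\<lambda>z. hyp_anomaly (fst z) (snd z)) has_derivative
           (\<lambda>h. (snd h + \<xi> * fst h) / (cosh \<xi> - k))) (at (k, y))"
proof -
  define f where "f z = (fst z, sinh (snd z) - fst z * snd z)" for z :: "real \<times> real"
  define g where "g z = (fst z, hyp_anomaly (fst z) (snd z))" for z :: "real \<times> real"
  have pos: "0 < cosh \<xi> - k" using cosh_real_ge_1[of \<xi>] assms(1) by linarith
  have "(g has_derivative (\<lambda>h. (fst h, (snd h + \<xi> * fst h) / (cosh \<xi> - k)))) (at (f (k, \<xi>)))"
  proof (rule has_derivative_inverse_strong[of "{..<1} \<times> UNIV" "(k, \<xi>)" f g])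
    show "continuous_on ({..<1} \<times> UNIV) f"
      unfolding f_def by (intro continuous_intros)
    show "g (f z) = z" if "z \<in> {..<1} \<times> UNIV" for z
      using that by (auto simp: f_def g_def hyp_anomaly_eq_iff)
    have "((\<lambda>z. sinh (snd z)) has_derivative (\<lambda>h. snd h * cosh \<xi>)) (at (k, \<xi>))"
      by (rule DERIV_compose_FDERIV) (auto intro!: derivative_eq_intros)
    then show "(f has_derivative (\<lambda>h. (fst h, (cosh \<xi> - k) * snd h - \<xi> * fst h))) (at (k, \<xi>))"
      unfolding f_def by (auto intro!: derivative_eq_intros simp: algebra_simps)
    show "(\<lambda>h. (fst h, (cosh \<xi> - k) * snd h - \<xi> * fst h)) \<circ>
        (\<lambda>h. (fst h, (snd h + \<xi> * fst h) / (cosh \<xi> - k))) = id"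
      using pos by (auto simp: fun_eq_iff)
  qed (use assms in \<open>auto intro: open_Times\<close>)
  moreover have "f (k, \<xi>) = (k, y)"
    using sinh_hyp_anomaly[OF assms(1)] by (simp add: f_def \<xi>_def)
  ultimately show ?thesis
    using has_derivative_snd by (fastforce simp: g_def)
qed

lemma differentiable_hyp_anomaly:
  assumes "f differentiable (at x within S)" "g differentiable (at x within S)" "f x < 1"
  shows "(\<lambda>x. hyp_anomaly (f x) (g x)) differentiable (at x within S)"
proof -
  have "(\<lambda>z. hyp_anomaly (fst z) (snd z)) differentiable (at (f x, g x))"
    using has_derivative_hyp_anomaly_at[OF assms(3)] unfolding differentiable_def by auto
  from differentiable_compose[OF this differentiable_Pair[OF assms(1,2)]] show ?thesis
    by simp
qed

lemma DERIV_hyp_anomaly: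
  assumes "k < 1" "(g has_real_derivative g') (at x within S)"
  shows "((\<lambda>x. hyp_anomaly k (g x)) has_real_derivative
           g' / (cosh (hyp_anomaly k (g x)) - k)) (at x within S)"
proof -
  have "((\<lambda>x. (k, g x)) has_derivative (\<lambda>h. (0, h * g'))) (at x within S)"
    using assms(2) unfolding has_field_derivative_def
    by (auto intro!: derivative_eq_intros simp: mult.commute)
  from has_derivative_compose[OF this has_derivative_hyp_anomaly_at[OF assms(1)]]
  have "((\<lambda>x. hyp_anomaly k (g x)) has_derivative
          (\<lambda>h. h * g' / (cosh (hyp_anomaly k (g x)) - k))) (at x within S)"
    by simp
  then show ?thesis
    unfolding has_field_derivative_def by (rule has_derivative_eq_rhs) (simp add: fun_eq_iff)
qed

section \<open>Derivatives along paths\<close>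

lemma has_derivative_partial_derivs:
  fixes f :: "real \<times> real \<Rightarrow> real"
  assumes "f differentiable (at (x, y))"
  shows "(f has_derivative
           (\<lambda>h. deriv (\<lambda>u. f (u, y)) x * fst h + deriv (\<lambda>v. f (x, v)) y * snd h)) (at (x, y))"
proof -
  obtain D where D: "(f has_derivative D) (at (x, y))"
    using assms unfolding differentiable_def by blast
  have lin: "linear D" using has_derivative_linear[OF D] .
  define d\<^sub>1 d\<^sub>2 where "d\<^sub>1 = D (1, 0)" and "d\<^sub>2 = D (0, 1)"
  have scale: "D (c, 0) = c * d\<^sub>1" "D (0, c) = c * d\<^sub>2" for c
    using linear_scale[OF lin, of c "(1, 0)"] linear_scale[OF lin, of c "(0, 1)"]
    by (simp_all add: d\<^sub>1_def d\<^sub>2_def)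
  have "((\<lambda>u. (u, y)) has_derivative (\<lambda>h. (h, 0))) (at x)"
    by (auto intro!: derivative_eq_intros)
  from has_derivative_compose[OF this D]
  have "((\<lambda>u. f (u, y)) has_real_derivative d\<^sub>1) (at x)"
    unfolding has_field_derivative_def
    by (rule has_derivative_eq_rhs) (simp add: fun_eq_iff scale mult.commute)
  then have dx: "deriv (\<lambda>u. f (u, y)) x = d\<^sub>1" by (rule DERIV_imp_deriv)
  have "((\<lambda>v. (x, v)) has_derivative (\<lambda>h. (0, h))) (at y)"
    by (auto intro!: derivative_eq_intros)
  from has_derivative_compose[OF this D]
  have "((\<lambda>v. f (x, v)) has_real_derivative d\<^sub>2) (at y)"
    unfolding has_field_derivative_def
    by (rule has_derivative_eq_rhs) (simp add: fun_eq_iff scale mult.commute)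
  then have dy: "deriv (\<lambda>v. f (x, v)) y = d\<^sub>2" by (rule DERIV_imp_deriv)
  have "D h = d\<^sub>1 * fst h + d\<^sub>2 * snd h" for h
  proof -
    have "D h = D (fst h, 0) + D (0, snd h)"
      using linear_add[OF lin, of "(fst h, 0)" "(0, snd h)"] by simp
    then show ?thesis by (simp add: scale mult.commute)
  qed
  then have "D = (\<lambda>h. d\<^sub>1 * fst h + d\<^sub>2 * snd h)" by (rule ext)
  with D show ?thesis unfolding dx dy by simp
qed

lemma has_real_derivative_compose_pair:
  fixes f :: "real \<times> real \<Rightarrow> real"
  assumes "(f has_derivative (\<lambda>h. A * fst h + B * snd h)) (at (u x, v x))"
    and "(u has_real_derivative u') (at x within S)" "(v has_real_derivative v') (at x within S)"
  shows "((\<lambda>y. f (u y, v y)) has_real_derivative A * u' + B * v') (at x within S)"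
proof -
  have "((\<lambda>y. (u y, v y)) has_derivative (\<lambda>h. (h * u', h * v'))) (at x within S)"
    using assms(2,3) unfolding has_field_derivative_def
    by (auto intro!: derivative_eq_intros simp: mult.commute)
  from has_derivative_compose[OF this assms(1)] show ?thesis
    unfolding has_field_derivative_def
    by (rule has_derivative_eq_rhs) (simp add: fun_eq_iff algebra_simps)
qed

lemma has_real_derivative_zero_squeeze:
  assumes "f t = 0" "g t = 0" "\<And>y. y \<in> S \<Longrightarrow> \<bar>f y\<bar> \<le> \<bar>g y\<bar>"
    and "(g has_real_derivative 0) (at t within S)"
  shows "(f has_real_derivative 0) (at t within S)"
proof -
  have "((\<lambda>y. (g y - g t) / (y - t)) \<longlongrightarrow> 0) (at t within S)"
    using assms(4) unfolding has_field_derivative_iff .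
  moreover have "\<forall>\<^sub>F y in at t within S. norm ((f y - f t) / (y - t)) \<le> norm ((g y - g t) / (y - t)) * 1"
    using assms(1-3) by (auto simp: eventually_at_filter abs_divide divide_right_mono)
  ultimately show ?thesis
    unfolding has_field_derivative_iff using tendsto_0_le by fastforce
qed

lemma sgn_mult_has_real_derivative:
  assumes f: "(f has_real_derivative f') (at t within S)"
    and s: "continuous (at t within S) s"
    and zero: "s t = 0 \<Longrightarrow> f t = 0 \<and> f' = 0"
  shows "((\<lambda>y. sgn (s y) * f y) has_real_derivative sgn (s t) * f') (at t within S)"
proof (cases "s t = 0")
  case True
  then show ?thesis
    using has_real_derivative_zero_squeeze[of "\<lambda>y. sgn (s y) * f y" t f S] f zero
    by (simp add: abs_mult abs_sgn_eq mult_le_cancel_right1)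
next
  case False
  have "\<forall>\<^sub>F y in at t within S. sgn (s y) = sgn (s t)"
  proof (cases "0 < s t")
    case True
    have "\<forall>\<^sub>F y in at t within S. 0 < s y"
      using order_tendstoD(1)[OF s[unfolded continuous_within] True] .
    then show ?thesis by eventually_elim (use True in simp)
  next
    case False
    with \<open>s t \<noteq> 0\<close> have neg: "s t < 0" by simp
    have "\<forall>\<^sub>F y in at t within S. s y < 0"
      using order_tendstoD(2)[OF s[unfolded continuous_within] neg] .
    then show ?thesis by eventually_elim (use neg in simp)
  qed
  then have "\<forall>\<^sub>F y in at t within S. sgn (s t) * f y = sgn (s y) * f y"
    by eventually_elim simp
  from has_field_derivative_cong_eventually[OF this] show ?thesis
    using DERIV_cmult[OF f, of "sgn (s t)"] by simp
qed

lemma nondecreasing_if_has_real_derivative_nonneg: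
  fixes V :: "real \<Rightarrow> real"
  assumes "\<And>t. t \<in> {0..T} \<Longrightarrow> \<exists>V'. (V has_real_derivative V') (at t within {0..T}) \<and> 0 \<le> V'"
    and "x \<in> {0..T}"
  shows "V 0 \<le> V x"
proof -
  have "continuous_on {0..T} V"
    unfolding continuous_on_eq_continuous_within using assms(1) DERIV_continuous by blast
  then have "continuous_on {0..x} V"
    by (rule continuous_on_subset) (use assms(2) in auto)
  moreover have "\<exists>d. (V has_real_derivative d) (at y) \<and> 0 \<le> d" if "0 < y" "y < x" for y
  proof -
    have "at y within {0..T} = at y" using that assms(2) by (intro at_within_Icc_at) auto
    then show ?thesis using assms(1)[of y] that assms(2) by auto
  qed
  ultimately show ?thesis
    using DERIV_nonneg_imp_increasing_open[of 0 x V] assms(2) by fastforce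
qed

lemma lyapunov_rate_nonneg:
  fixes a c E X q \<sigma> w :: real
  assumes "0 < a" "0 \<le> E" "0 < w" "\<sigma> * X = \<bar>X\<bar>" "\<bar>\<sigma>\<bar> \<le> 1"
    and "\<bar>c\<bar> \<le> E / w" "E * \<bar>q\<bar> \<le> a / 2"
  shows "0 \<le> 2 * a * (c * X) + 4 * E * (\<sigma> * (a * X / w - q * (c * X)))"
proof -
  define K where "K = a * (E / w * \<bar>X\<bar>)"
  have "\<bar>c\<bar> * \<bar>X\<bar> \<le> E / w * \<bar>X\<bar>"
    using assms(6) by (rule mult_right_mono) simp
  then have "2 * a * (\<bar>c\<bar> * \<bar>X\<bar>) \<le> 2 * a * (E / w * \<bar>X\<bar>)"
    by (rule mult_left_mono) (use assms(1) in simp)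
  then have "\<bar>2 * a * (c * X)\<bar> \<le> 2 * K"
    using assms(1) by (simp add: abs_mult K_def)
  moreover have "\<bar>4 * E * (\<sigma> * (q * (c * X)))\<bar> \<le> 2 * K"
  proof -
    have "\<bar>4 * E * (\<sigma> * (q * (c * X)))\<bar> = 4 * \<bar>\<sigma>\<bar> * (E * \<bar>q\<bar>) * (\<bar>c\<bar> * \<bar>X\<bar>)"
      using assms(2) by (simp add: abs_mult)
    also have "\<dots> \<le> 4 * 1 * (a / 2) * (E / w * \<bar>X\<bar>)"
      using assms by (intro mult_mono mult_right_mono) auto
    finally show ?thesis by (simp add: K_def)
  qed
  moreover have "4 * E * (\<sigma> * (a * X / w)) = 4 * K"
    using assms(4) by (simp add: K_def field_simps)
  moreover have "2 * a * (c * X) + 4 * E * (\<sigma> * (a * X / w - q * (c * X)))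
      = 2 * a * (c * X) + 4 * E * (\<sigma> * (a * X / w)) - 4 * E * (\<sigma> * (q * (c * X)))"
    by (simp add: algebra_simps)
  ultimately show ?thesis unfolding abs_le_iff by linarith
qed

lemma drift_budget_small_l:
  fixes a B E \<delta> l :: real
  assumes "0 < l" "l \<le> 1" "0 \<le> E" "64 * E \<le> \<delta>\<^sup>2" "\<delta>\<^sup>2 \<le> a\<^sup>2 * jbr l" "B \<le> 2"
  shows "8 * E * B \<le> 3 / 4 * a\<^sup>2"
proof -
  have "l\<^sup>2 \<le> 1" using assms(1,2) by (intro power_le_one) auto
  then have "jbr l \<le> 2" unfolding jbr_def by (intro real_le_lsqrt) auto
  then have "a\<^sup>2 * jbr l \<le> a\<^sup>2 * 2" by (rule mult_left_mono) simp
  moreover have "8 * E * B \<le> 8 * E * 2" using assms(3,6) by (intro mult_left_mono) auto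
  ultimately show ?thesis using assms(4,5) zero_le_power2[of a] by linarith
qed

lemma drift_budget_large_l:
  fixes a B E \<delta> l m :: real
  assumes l: "1 < l" and a: "0 < a" and E: "0 \<le> E" "64 * ((1 + m) * E) \<le> \<delta>\<^sup>2" "64 * E \<le> \<delta>"
    and D: "\<delta>\<^sup>2 \<le> a\<^sup>2 * jbr l" and B: "B \<le> m / l + a / sqrt l"
  shows "8 * E * B \<le> 3 / 4 * a\<^sup>2"
proof -
  have "1 * 1 \<le> l * l" using l by (intro mult_mono) auto
  then have "jbr l \<le> 2 * l"
    unfolding jbr_def using l by (intro real_le_lsqrt) (auto simp: power2_eq_square)
  then have "a\<^sup>2 * jbr l \<le> a\<^sup>2 * (2 * l)" by (rule mult_left_mono) simp
  then have al: "\<delta>\<^sup>2 \<le> 2 * (a\<^sup>2 * l)" using D by linarith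
  have al0: "0 \<le> a\<^sup>2 * l" using l by simp
  have "E * m \<le> (1 + m) * E" using E(1) by (simp add: algebra_simps)
  then have "8 * (E * m) \<le> 3 / 8 * (a\<^sup>2 * l)" using E(2) al al0 by linarith
  then have Bm: "8 * E * (m / l) \<le> 3 / 8 * a\<^sup>2" using l by (simp add: field_simps)
  have "\<delta> / 2 \<le> a * sqrt l"
  proof (rule power2_le_imp_le)
    have "(\<delta> / 2)\<^sup>2 = \<delta>\<^sup>2 / 4" "(a * sqrt l)\<^sup>2 = a\<^sup>2 * l"
      using l by (simp_all add: power_divide power_mult_distrib)
    then show "(\<delta> / 2)\<^sup>2 \<le> (a * sqrt l)\<^sup>2" using al al0 by linarith
  qed (use a l in simp)
  then have "8 * E \<le> 3 / 8 * (a * sqrt l)" using E by linarith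
  then have "8 * E * (a / sqrt l) \<le> 3 / 8 * (a * sqrt l) * (a / sqrt l)"
    using a l by (intro mult_right_mono) auto
  also have "\<dots> = 3 / 8 * a\<^sup>2" using l by (simp add: power2_eq_square)
  finally have Ba: "8 * E * (a / sqrt l) \<le> 3 / 8 * a\<^sup>2" .
  have "8 * E * B \<le> 8 * E * (m / l + a / sqrt l)"
    using B E by (intro mult_left_mono) auto
  then have "8 * E * B \<le> 8 * E * (m / l) + 8 * E * (a / sqrt l)"
    by (simp only: distrib_left)
  then show ?thesis using Bm Ba by linarith
qed

lemma drift_budget:
  fixes a B E \<delta> l m :: real
  assumes "0 < l" "0 < a" "0 \<le> m" "0 \<le> E" "64 * ((1 + m) * E) \<le> \<delta>\<^sup>2" "64 * E \<le> \<delta>"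
    and "\<delta>\<^sup>2 \<le> a\<^sup>2 * jbr l" "B \<le> 2" "B \<le> m / l + a / sqrt l"
  shows "8 * E * B \<le> 3 / 4 * a\<^sup>2"
proof (cases "l \<le> 1")
  case True
  have "E \<le> (1 + m) * E" using mult_nonneg_nonneg[OF assms(3,4)] by (simp add: distrib_right)
  then have "64 * E \<le> \<delta>\<^sup>2" using assms(5) by linarith
  then show ?thesis using drift_budget_small_l[OF assms(1) True assms(4) _ assms(7,8)] by blast
next
  case False
  then show ?thesis using drift_budget_large_l[OF _ assms(2,4,5,6,7,9)] by simp
qed

section \<open>The radial function\<close>

locale hyperbolic_kepler =
  fixes m l :: real
  assumes m_pos: "0 < m" and l_pos: "0 < l"
begin

lemma kappa_bounds:
  assumes "a \<noteq> 0"
  shows "0 < kappa m a l" "kappa m a l < 1"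
proof -
  have "1 < 1 + 4 * a\<^sup>2 * l / m\<^sup>2" using assms m_pos l_pos by simp
  then show "0 < kappa m a l" "kappa m a l < 1" by (simp_all add: kappa_def)
qed

lemma pp_pos: "a \<noteq> 0 \<Longrightarrow> 0 < pp m a l"
  using kappa_bounds m_pos by (simp add: pp_def)

lemma RR_eq_cosh_hyp_anomaly:
  assumes "a \<noteq> 0"
  shows "RR m s a l =
    pp m a l * (cosh (hyp_anomaly (kappa m a l) (s / pp m a l)) - kappa m a l)"
proof -
  have \<kappa>: "kappa m a l < 1" and p: "0 < pp m a l" using kappa_bounds pp_pos assms by auto
  have "cosh (hyp_anomaly (kappa m a l) (\<bar>s\<bar> / pp m a l))
      = cosh (hyp_anomaly (kappa m a l) (s / pp m a l))"
    using p hyp_anomaly_uminus[OF \<kappa>, of "s / pp m a l"] by (cases "0 \<le> s") auto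
  then show ?thesis
    using Hk_eq_cosh_hyp_anomaly[OF \<kappa>, of "\<bar>s\<bar> / pp m a l"] p
    by (simp add: RR_def right_diff_distrib)
qed

definition Rmin :: "real \<Rightarrow> real" where
  "Rmin a = 2 * l / (m * (1 + sqrt (1 + 4 * a\<^sup>2 * l / m\<^sup>2)))"

lemma Rmin_pos: "0 < Rmin a"
  using m_pos l_pos by (simp add: Rmin_def add_pos_nonneg)

lemma pp_one_minus_kappa:
  assumes "a \<noteq> 0"
  shows "pp m a l * (1 - kappa m a l) = Rmin a"
proof -
  define S where "S = sqrt (1 + 4 * a\<^sup>2 * l / m\<^sup>2)"
  have S1: "1 \<le> S" using m_pos l_pos by (simp add: S_def)
  have "S\<^sup>2 = 1 + 4 * a\<^sup>2 * l / m\<^sup>2" using m_pos l_pos by (simp add: S_def add_pos_nonneg)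
  then have S2: "(S - 1) * (1 + S) * m\<^sup>2 = 4 * a\<^sup>2 * l"
    using m_pos by (simp add: algebra_simps power2_eq_square)
  have "pp m a l = m * S / (2 * a\<^sup>2)" "kappa m a l = 1 / S"
    by (simp_all add: pp_def kappa_def S_def)
  then have "pp m a l * (1 - kappa m a l) = m * (S - 1) / (2 * a\<^sup>2)"
    using S1 by (simp add: field_simps)
  also have "\<dots> = 2 * l / (m * (1 + S))"
  proof -
    have "0 < m * (1 + S)" using S1 m_pos by simp
    then show ?thesis
      using S2 assms m_pos by (subst frac_eq_eq) (auto simp: algebra_simps power2_eq_square)
  qed
  finally show ?thesis by (simp add: Rmin_def S_def)
qed

lemma Rmin_le_RR:
  assumes "a \<noteq> 0"
  shows "Rmin a \<le> RR m s a l"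
proof -
  have "pp m a l * (1 - kappa m a l) \<le> pp m a l * (cosh (hyp_anomaly (kappa m a l) (s / pp m a l)) - kappa m a l)"
    using pp_pos[OF assms] cosh_real_ge_1 by (intro mult_left_mono) auto
  then show ?thesis
    using RR_eq_cosh_hyp_anomaly[OF assms] pp_one_minus_kappa[OF assms] by simp
qed

lemma RR_zero: "a \<noteq> 0 \<Longrightarrow> RR m 0 a l = Rmin a"
  using RR_eq_cosh_hyp_anomaly pp_one_minus_kappa kappa_bounds
  by (simp add: hyp_anomaly_zero)

lemma differentiable_pp: "a \<noteq> 0 \<Longrightarrow> (\<lambda>a. pp m a l) differentiable (at a)"
proof -
  assume "a \<noteq> 0"
  have "pp m b l = m * sqrt (1 + 4 * b\<^sup>2 * l / m\<^sup>2) / (2 * b\<^sup>2)" for b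
    by (simp add: pp_def kappa_def)
  moreover have "0 < 1 + 4 * a\<^sup>2 * l / m\<^sup>2" using l_pos by (simp add: add_pos_nonneg)
  ultimately show ?thesis
    using \<open>a \<noteq> 0\<close> m_pos unfolding real_differentiable_def
    by (intro exI) (auto intro!: derivative_eq_intros)
qed

lemma differentiable_kappa: "(\<lambda>a. kappa m a l) differentiable (at a)"
proof -
  have "0 < 1 + 4 * a\<^sup>2 * l / m\<^sup>2" using l_pos by (simp add: add_pos_nonneg)
  then show ?thesis
    using m_pos unfolding real_differentiable_def kappa_def
    by (intro exI) (auto intro!: derivative_eq_intros)
qed

lemma RR_differentiable:
  assumes "0 < a"
  shows "(\<lambda>z. RR m (fst z) (snd z) l) differentiable (at (s, a))"
proof -
  define P where "P z = pp m (snd z) l" for z :: "real \<times> real"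
  define K where "K z = kappa m (snd z) l" for z :: "real \<times> real"
  have fst: "fst differentiable (at (s, a))" and snd: "snd differentiable (at (s, a))"
    by (simp_all add: bounded_linear_imp_differentiable bounded_linear_fst bounded_linear_snd)
  have P: "P differentiable (at (s, a))"
    unfolding P_def using differentiable_pp assms
    by (intro differentiable_compose[of "\<lambda>a. pp m a l", OF _ snd]) auto
  have K: "K differentiable (at (s, a))"
    unfolding K_def by (intro differentiable_compose[of "\<lambda>a. kappa m a l", OF _ snd] differentiable_kappa)
  have "(\<lambda>z. fst z / P z) differentiable (at (s, a))"
    by (rule differentiable_divide[OF fst P]) (use assms pp_pos[of a] in \<open>simp add: P_def\<close>)
  then have "(\<lambda>z. hyp_anomaly (K z) (fst z / P z)) differentiable (at (s, a))"
    by (rule differentiable_hyp_anomaly[OF K]) (use assms kappa_bounds in \<open>simp add: K_def\<close>)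
  then have "(\<lambda>z. cosh (hyp_anomaly (K z) (fst z / P z))) differentiable (at (s, a))"
    by (rule differentiable_compose[of cosh, rotated])
       (auto simp: real_differentiable_def intro!: derivative_eq_intros)
  then have E: "(\<lambda>z. P z * (cosh (hyp_anomaly (K z) (fst z / P z)) - K z)) differentiable (at (s, a))"
    by (intro differentiable_mult[OF P] differentiable_diff[OF _ K])
  show ?thesis
  proof (rule differentiable_transform_within[OF E assms])
    fix z :: "real \<times> real"
    assume "dist z (s, a) < a"
    then have "0 < snd z" using dist_snd_le[of z "(s, a)"] by (auto simp: dist_real_def)
    then show "P z * (cosh (hyp_anomaly (K z) (fst z / P z)) - K z) = RR m (fst z) (snd z) l"
      by (simp add: RR_eq_cosh_hyp_anomaly P_def K_def)
  qed simp
qed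

definition dR_ds :: "real \<Rightarrow> real \<Rightarrow> real" where
  "dR_ds s a = deriv (\<lambda>\<sigma>. RR m \<sigma> a l) s"

definition dR_da :: "real \<Rightarrow> real \<Rightarrow> real" where
  "dR_da s a = deriv (\<lambda>b. RR m s b l) a"

lemma RR_has_derivative_along:
  assumes "0 < v x" "(u has_real_derivative u') (at x within S)" "(v has_real_derivative v') (at x within S)"
  shows "((\<lambda>y. RR m (u y) (v y) l) has_real_derivative
           dR_ds (u x) (v x) * u' + dR_da (u x) (v x) * v') (at x within S)"
  using has_real_derivative_compose_pair[OF
      has_derivative_partial_derivs[OF RR_differentiable[OF assms(1)]] assms(2,3)]
  by (simp add: dR_ds_def dR_da_def)

lemma dth_Rtil_eq:
  assumes "0 < a"
  shows "dth_Rtil m l t \<theta> a = dR_ds (\<theta> + a * t) a"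
proof -
  have "((\<lambda>\<theta>'. RR m (\<theta>' + a * t) a l) has_real_derivative
          dR_ds (\<theta> + a * t) a * 1 + dR_da (\<theta> + a * t) a * 0) (at \<theta>)"
    by (rule RR_has_derivative_along[where u = "\<lambda>\<theta>'. \<theta>' + a * t" and v = "\<lambda>_. a"])
       (auto intro!: derivative_eq_intros simp: assms)
  then show ?thesis unfolding dth_Rtil_def Rtil_def by (simp add: DERIV_imp_deriv)
qed

lemma da_Rtil_eq:
  assumes "0 < a"
  shows "da_Rtil m l t \<theta> a = t * dR_ds (\<theta> + a * t) a + dR_da (\<theta> + a * t) a"
proof -
  have "((\<lambda>b. RR m (\<theta> + b * t) b l) has_real_derivative
          dR_ds (\<theta> + a * t) a * t + dR_da (\<theta> + a * t) a * 1) (at a)"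
    by (rule RR_has_derivative_along[where u = "\<lambda>b. \<theta> + b * t" and v = "\<lambda>b. b"])
       (auto intro!: derivative_eq_intros simp: assms)
  then show ?thesis unfolding da_Rtil_def Rtil_def by (simp add: DERIV_imp_deriv mult.commute)
qed

lemma sgn_dR_ds:
  assumes "0 < a"
  shows "sgn (dR_ds s a) = sgn s"
proof -
  define p where "p = pp m a l"
  define k where "k = kappa m a l"
  define \<xi> where "\<xi> = hyp_anomaly k (s / p)"
  have p: "0 < p" and k: "k < 1" using assms pp_pos kappa_bounds by (auto simp: p_def k_def)
  have "((\<lambda>\<sigma>. p * (cosh (hyp_anomaly k (\<sigma> / p)) - k)) has_real_derivative
          p * (sinh \<xi> * ((1 / p) / (cosh \<xi> - k)))) (at s)"
    by (auto intro!: derivative_eq_intros DERIV_hyp_anomaly[OF k] simp: \<xi>_def)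
  moreover have "(\<lambda>\<sigma>. RR m \<sigma> a l) = (\<lambda>\<sigma>. p * (cosh (hyp_anomaly k (\<sigma> / p)) - k))"
    using assms by (simp add: fun_eq_iff RR_eq_cosh_hyp_anomaly p_def k_def)
  ultimately have "dR_ds s a = sinh \<xi> / (cosh \<xi> - k)"
    unfolding dR_ds_def using p by (simp add: DERIV_imp_deriv)
  moreover have "0 < cosh \<xi> - k" using cosh_real_ge_1[of \<xi>] k by linarith
  ultimately have "sgn (dR_ds s a) = sgn (sinh \<xi>)" by simp
  also have "\<dots> = sgn \<xi>" by (simp add: sgn_if)
  also have "\<dots> = sgn s" using sgn_hyp_anomaly[OF k, of "s / p"] p by (simp add: \<xi>_def)
  finally show ?thesis .
qed

section \<open>The Lyapunov function\<close>

lemma Rmin_has_real_derivative: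
  "(Rmin has_real_derivative - 2 * a * (Rmin a)\<^sup>2 / (m * sqrt (1 + 4 * a\<^sup>2 * l / m\<^sup>2))) (at a)"
proof -
  let ?S = "sqrt (1 + 4 * a\<^sup>2 * l / m\<^sup>2)"
  have S1: "1 \<le> ?S" using m_pos l_pos by simp
  have "0 < 1 + 4 * a\<^sup>2 * l / m\<^sup>2" using l_pos by (simp add: add_pos_nonneg)
  then have "((\<lambda>b. sqrt (1 + 4 * b\<^sup>2 * l / m\<^sup>2)) has_real_derivative 4 * a * l / (m\<^sup>2 * ?S)) (at a)"
    using m_pos by (auto intro!: derivative_eq_intros simp: field_simps power2_eq_square)
  moreover have "0 < m * (1 + ?S)" using m_pos S1 by (intro mult_pos_pos) linarith+
  ultimately have "(Rmin has_real_derivative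
      (0 * (m * (1 + ?S)) - 2 * l * (m * (0 + 4 * a * l / (m\<^sup>2 * ?S)))) / ((m * (1 + ?S)) * (m * (1 + ?S))))
      (at a)"
    unfolding Rmin_def by (intro DERIV_divide DERIV_cmult DERIV_add DERIV_const) auto
  moreover have "(0 * (m * (1 + S)) - 2 * l * (m * (0 + 4 * a * l / (m\<^sup>2 * S)))) / ((m * (1 + S)) * (m * (1 + S)))
      = - 2 * a * (2 * l / (m * (1 + S)))\<^sup>2 / (m * S)" if "1 \<le> S" for S
    using m_pos that by (simp add: field_simps power2_eq_square)
  ultimately show ?thesis
    using S1 by (simp only: Rmin_def)
qed

lemma DERIV_Rmin_deriv: "(Rmin has_real_derivative deriv Rmin a) (at a)"
  using Rmin_has_real_derivative DERIV_imp_deriv by metis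

lemma abs_deriv_Rmin_le:
  assumes "0 < a"
  shows "\<bar>deriv Rmin a\<bar> \<le> 2 * a * (Rmin a)\<^sup>2 / m"
proof -
  have S: "1 \<le> sqrt (1 + 4 * a\<^sup>2 * l / m\<^sup>2)" using m_pos l_pos by simp
  have "\<bar>deriv Rmin a\<bar> = 2 * a * (Rmin a)\<^sup>2 / (m * sqrt (1 + 4 * a\<^sup>2 * l / m\<^sup>2))"
    using DERIV_imp_deriv[OF Rmin_has_real_derivative] assms m_pos S by simp
  also have "\<dots> \<le> 2 * a * (Rmin a)\<^sup>2 / m"
    using assms m_pos S by (intro divide_left_mono) (auto intro!: mult_pos_pos)
  finally show ?thesis .
qed

lemma Rmin_antimono:
  assumes "0 < a" "a \<le> b"
  shows "Rmin b \<le> Rmin a"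
proof -
  have "a\<^sup>2 \<le> b\<^sup>2" using assms by (intro power_mono) auto
  then have "4 * a\<^sup>2 * l / m\<^sup>2 \<le> 4 * b\<^sup>2 * l / m\<^sup>2"
    using l_pos by (intro divide_right_mono mult_right_mono) auto
  then have "m * (1 + sqrt (1 + 4 * a\<^sup>2 * l / m\<^sup>2)) \<le> m * (1 + sqrt (1 + 4 * b\<^sup>2 * l / m\<^sup>2))"
    using m_pos by simp
  then show ?thesis
    unfolding Rmin_def using m_pos l_pos
    by (intro divide_left_mono) (auto intro!: mult_pos_pos add_pos_nonneg)
qed

lemma pi_half_minus_arctan_Rmin_le:
  assumes "0 < a"
  shows "pi / 2 - arctan (Rmin a) \<le> m / l + a / sqrt l"
proof -
  define q where "q = sqrt l"
  have q: "0 < q" "q\<^sup>2 = l" using l_pos by (auto simp: q_def)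
  have "(1 + 2 * a * q / m)\<^sup>2 = 1 + 4 * a * q / m + 4 * a\<^sup>2 * l / m\<^sup>2"
    using m_pos q by (simp add: power2_eq_square field_simps)
  moreover have "0 \<le> 4 * a * q / m" using assms m_pos q by simp
  ultimately have "sqrt (1 + 4 * a\<^sup>2 * l / m\<^sup>2) \<le> 1 + 2 * a * q / m"
    using assms m_pos q by (intro real_le_lsqrt) auto
  then have "1 / Rmin a \<le> m * (2 + 2 * a * q / m) / (2 * l)"
    using m_pos l_pos by (simp add: Rmin_def divide_right_mono)
  also have "\<dots> = m / l + a / q"
    using m_pos q by (simp add: field_simps power2_eq_square flip: q(2))
  finally have "1 / Rmin a \<le> m / l + a / q" .
  moreover have "pi / 2 - arctan (Rmin a) = arctan (1 / Rmin a)"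
    using arctan_inverse[of "Rmin a"] Rmin_pos by (simp add: inverse_eq_divide)
  moreover have "arctan (1 / Rmin a) \<le> 1 / Rmin a"
    using Rmin_pos by (intro arctan_le_self) (simp add: less_imp_le)
  ultimately show ?thesis by (simp add: q_def)
qed

definition arctan_gap :: "real \<Rightarrow> real \<Rightarrow> real" where
  "arctan_gap s a = sgn s * (arctan (RR m s a l) - arctan (Rmin a))"

lemma abs_arctan_gap_le:
  assumes "0 < a"
  shows "\<bar>arctan_gap s a\<bar> \<le> pi / 2 - arctan (Rmin a)"
proof -
  have gap: "0 \<le> arctan (RR m s a l) - arctan (Rmin a)"
    using Rmin_le_RR assms by (simp add: arctan_le_iff)
  have "\<bar>arctan_gap s a\<bar> = \<bar>sgn s\<bar> * (arctan (RR m s a l) - arctan (Rmin a))"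
    using gap by (simp add: arctan_gap_def abs_mult)
  also have "\<dots> \<le> 1 * (arctan (RR m s a l) - arctan (Rmin a))"
    using gap by (intro mult_right_mono) (auto simp: abs_sgn_eq)
  finally have "\<bar>arctan_gap s a\<bar> \<le> arctan (RR m s a l) - arctan (Rmin a)" by simp
  then show ?thesis using arctan_ubound[of "RR m s a l"] by linarith
qed

text \<open>The \<open>dR_da\<close> contributions of \<open>\<theta>'\<close> and of the chain rule cancel.\<close>

lemma RR_along_flow:
  fixes \<theta> a s :: "real \<Rightarrow> real"
  assumes s: "\<And>y. s y = \<theta> y + a y * y" and pos: "0 < a t"
    and \<theta>: "(\<theta> has_real_derivative \<theta>') (at t within S)" "\<theta>' = - c * da_Rtil m l t (\<theta> t) (a t)"
    and a: "(a has_real_derivative a') (at t within S)" "a' = c * dth_Rtil m l t (\<theta> t) (a t)"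
  shows "a' = c * dR_ds (s t) (a t)"
    and "((\<lambda>y. RR m (s y) (a y) l) has_real_derivative a t * dR_ds (s t) (a t)) (at t within S)"
    and "continuous (at t within S) s"
proof -
  show a': "a' = c * dR_ds (s t) (a t)"
    using a(2) dth_Rtil_eq[OF pos] by (simp add: s)
  have s': "(s has_real_derivative \<theta>' + (a' * t + 1 * a t)) (at t within S)"
    unfolding s[abs_def] by (intro DERIV_add \<theta>(1) DERIV_mult[OF a(1) DERIV_ident])
  then show "continuous (at t within S) s" by (rule DERIV_continuous)
  have "\<theta>' = - c * (t * dR_ds (s t) (a t) + dR_da (s t) (a t))"
    using \<theta>(2) da_Rtil_eq[OF pos] by (simp add: s)
  with RR_has_derivative_along[OF pos s' a(1)] a'
  show "((\<lambda>y. RR m (s y) (a y) l) has_real_derivative a t * dR_ds (s t) (a t)) (at t within S)"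
    by (simp add: algebra_simps)
qed

lemma weighted_deriv_Rmin_le:
  assumes "0 < a" "0 \<le> E" "E \<le> m / 4"
  shows "E * \<bar>deriv Rmin a / (1 + (Rmin a)\<^sup>2)\<bar> \<le> a / 2"
proof -
  have w: "0 < 1 + (Rmin a)\<^sup>2" by (simp add: add_pos_nonneg)
  have "\<bar>deriv Rmin a\<bar> / (1 + (Rmin a)\<^sup>2) \<le> 2 * a * (Rmin a)\<^sup>2 / m / (1 + (Rmin a)\<^sup>2)"
    using abs_deriv_Rmin_le[OF assms(1)] by (rule divide_right_mono) (use w in simp)
  then have "\<bar>deriv Rmin a / (1 + (Rmin a)\<^sup>2)\<bar> \<le> 2 * a * (Rmin a)\<^sup>2 / m / (1 + (Rmin a)\<^sup>2)"
    using w by (simp add: abs_divide)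
  then have "E * \<bar>deriv Rmin a / (1 + (Rmin a)\<^sup>2)\<bar> \<le> E * (2 * a * (Rmin a)\<^sup>2 / m / (1 + (Rmin a)\<^sup>2))"
    using assms(2) by (rule mult_left_mono)
  also have "\<dots> = (E * 2 * a / m) * ((Rmin a)\<^sup>2 / (1 + (Rmin a)\<^sup>2))" by (simp add: field_simps)
  also have "\<dots> \<le> (E * 2 * a / m) * 1"
    using assms m_pos w by (intro mult_left_mono) auto
  also have "\<dots> \<le> a / 2" using assms m_pos by (simp add: field_simps)
  finally show ?thesis .
qed

lemma arctan_gap_along_flow:
  fixes \<theta> a s :: "real \<Rightarrow> real"
  assumes "\<And>y. s y = \<theta> y + a y * y" and "0 < a t"
    and "(\<theta> has_real_derivative \<theta>') (at t within S)" "\<theta>' = - c * da_Rtil m l t (\<theta> t) (a t)"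
    and "(a has_real_derivative a') (at t within S)" "a' = c * dth_Rtil m l t (\<theta> t) (a t)"
  shows "((\<lambda>y. arctan_gap (s y) (a y)) has_real_derivative
           sgn (s t) * (a t * dR_ds (s t) (a t) / (1 + (RR m (s t) (a t) l)\<^sup>2)
             - deriv Rmin (a t) / (1 + (Rmin (a t))\<^sup>2) * a')) (at t within S)"
proof -
  note flow = RR_along_flow[OF assms]
  have "((\<lambda>y. arctan (RR m (s y) (a y) l) - arctan (Rmin (a y))) has_real_derivative
      a t * dR_ds (s t) (a t) / (1 + (RR m (s t) (a t) l)\<^sup>2)
        - deriv Rmin (a t) / (1 + (Rmin (a t))\<^sup>2) * a') (at t within S)"
    using DERIV_diff[OF DERIV_chain2[OF DERIV_arctan flow(2)]
        DERIV_chain2[OF DERIV_arctan DERIV_chain2[OF DERIV_Rmin_deriv assms(5)]]]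
    by (simp add: divide_inverse ac_simps)
  moreover have "RR m (s t) (a t) l = Rmin (a t) \<and> dR_ds (s t) (a t) = 0" if "s t = 0"
    using that RR_zero sgn_dR_ds[OF assms(2), of 0] assms(2) by (simp add: sgn_0_0)
  ultimately show ?thesis
    unfolding arctan_gap_def using flow
    by (intro sgn_mult_has_real_derivative) auto
qed

lemma lyapunov_has_derivative_nonneg:
  fixes \<theta> a s :: "real \<Rightarrow> real" and F :: "real \<Rightarrow> real \<Rightarrow> real"
  assumes s: "\<And>y. s y = \<theta> y + a y * y" and lam: "0 < lam" and E: "0 \<le> E" "E \<le> m / 4"
    and F: "\<forall>r>0. lam * \<bar>F t r\<bar> \<le> E / (1 + r\<^sup>2)" and pos: "0 < a t"
    and \<theta>: "(\<theta> has_real_derivative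
               (- lam * F t (Rtil m l t (\<theta> t) (a t)) * da_Rtil m l t (\<theta> t) (a t))) (at t within S)"
    and a: "(a has_real_derivative
               (lam * F t (Rtil m l t (\<theta> t) (a t)) * dth_Rtil m l t (\<theta> t) (a t))) (at t within S)"
  shows "\<exists>V'. ((\<lambda>y. (a y)\<^sup>2 + 4 * E * arctan_gap (s y) (a y)) has_real_derivative V') (at t within S)
           \<and> 0 \<le> V'"
proof -
  define R where "R = RR m (s t) (a t) l"
  define c where "c = lam * F t R"
  define X where "X = dR_ds (s t) (a t)"
  define q where "q = deriv Rmin (a t) / (1 + (Rmin (a t))\<^sup>2)"
  have R: "Rtil m l t (\<theta> t) (a t) = R" by (simp add: Rtil_def R_def s)
  have \<theta>': "(\<theta> has_real_derivative - c * da_Rtil m l t (\<theta> t) (a t)) (at t within S)"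
    and a': "(a has_real_derivative c * dth_Rtil m l t (\<theta> t) (a t)) (at t within S)"
    using \<theta> a unfolding R c_def by simp_all
  have cX: "c * dth_Rtil m l t (\<theta> t) (a t) = c * X"
    using RR_along_flow[OF s pos \<theta>' refl a' refl] by (simp add: X_def)
  have "((\<lambda>y. arctan_gap (s y) (a y)) has_real_derivative
      sgn (s t) * (a t * X / (1 + R\<^sup>2) - q * (c * X))) (at t within S)"
    using arctan_gap_along_flow[OF s pos \<theta>' refl a' refl] cX by (simp add: R_def X_def q_def)
  moreover have "((\<lambda>y. (a y)\<^sup>2) has_real_derivative 2 * a t * (c * X)) (at t within S)"
  proof -
    have aX: "(a has_real_derivative c * X) (at t within S)" using a' cX by simp
    show ?thesis
      using DERIV_mult[OF aX aX] unfolding power2_eq_square by (rule DERIV_cong) simp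
  qed
  ultimately have "((\<lambda>y. (a y)\<^sup>2 + 4 * E * arctan_gap (s y) (a y)) has_real_derivative
      2 * a t * (c * X) + 4 * E * (sgn (s t) * (a t * X / (1 + R\<^sup>2) - q * (c * X)))) (at t within S)"
    by (intro DERIV_add DERIV_cmult)
  moreover have "0 \<le> 2 * a t * (c * X) + 4 * E * (sgn (s t) * (a t * X / (1 + R\<^sup>2) - q * (c * X)))"
  proof (rule lyapunov_rate_nonneg[OF pos E(1)])
    show "0 < 1 + R\<^sup>2" by (simp add: add_pos_nonneg)
    show "sgn (s t) * X = \<bar>X\<bar>"
      using sgn_dR_ds[OF pos, of "s t"] by (simp add: X_def abs_sgn mult.commute)
    show "\<bar>sgn (s t)\<bar> \<le> 1" by (simp add: abs_sgn_eq)
    have "0 < R" using Rmin_le_RR[of "a t" "s t"] Rmin_pos[of "a t"] pos by (simp add: R_def)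
    then show "\<bar>c\<bar> \<le> E / (1 + R\<^sup>2)" using F lam by (simp add: c_def abs_mult)
    show "E * \<bar>q\<bar> \<le> a t / 2" using weighted_deriv_Rmin_le[OF pos E] by (simp add: q_def)
  qed
  ultimately show ?thesis by blast
qed

lemma lyapunov_nondecreasing:
  fixes \<theta> a :: "real \<Rightarrow> real" and F :: "real \<Rightarrow> real \<Rightarrow> real"
  assumes lam: "0 < lam" and E: "0 \<le> E" "E \<le> m / 4"
    and F: "\<forall>t\<in>{0..T}. \<forall>r>0. lam * \<bar>F t r\<bar> \<le> E / (1 + r\<^sup>2)"
    and flow: "\<forall>t\<in>{0..T}. 0 < a t
          \<and> (\<theta> has_real_derivative
               (- lam * F t (Rtil m l t (\<theta> t) (a t)) * da_Rtil m l t (\<theta> t) (a t)))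
               (at t within {0..T})
          \<and> (a has_real_derivative
               (lam * F t (Rtil m l t (\<theta> t) (a t)) * dth_Rtil m l t (\<theta> t) (a t)))
               (at t within {0..T})"
    and x: "x \<in> {0..T}"
  shows "(a 0)\<^sup>2 + 4 * E * arctan_gap (\<theta> 0) (a 0)
           \<le> (a x)\<^sup>2 + 4 * E * arctan_gap (\<theta> x + a x * x) (a x)"
proof -
  define s where "s y = \<theta> y + a y * y" for y
  have "\<exists>V'. ((\<lambda>y. (a y)\<^sup>2 + 4 * E * arctan_gap (s y) (a y)) has_real_derivative V')
      (at t within {0..T}) \<and> 0 \<le> V'" if "t \<in> {0..T}" for t
    using bspec[OF flow that]
      lyapunov_has_derivative_nonneg[where s = s and \<theta> = \<theta> and a = a and F = F and t = t,
        OF s_def lam E bspec[OF F that]]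
    by blast
  from nondecreasing_if_has_real_derivative_nonneg[OF this x] show ?thesis
    by (simp add: s_def)
qed

lemma amplitude_halving:
  fixes \<theta> a :: "real \<Rightarrow> real" and F :: "real \<Rightarrow> real \<Rightarrow> real"
  assumes lam: "0 < lam"
    and E: "0 \<le> E" "E \<le> m / 4" "64 * ((1 + m) * E) \<le> \<delta>\<^sup>2" "64 * E \<le> \<delta>"
    and F: "\<forall>t\<in>{0..T}. \<forall>r>0. lam * \<bar>F t r\<bar> \<le> E / (1 + r\<^sup>2)"
    and flow: "\<forall>t\<in>{0..T}. 0 < a t
          \<and> (\<theta> has_real_derivative
               (- lam * F t (Rtil m l t (\<theta> t) (a t)) * da_Rtil m l t (\<theta> t) (a t)))
               (at t within {0..T})
          \<and> (a has_real_derivative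
               (lam * F t (Rtil m l t (\<theta> t) (a t)) * dth_Rtil m l t (\<theta> t) (a t)))
               (at t within {0..T})"
    and D: "\<delta> \<le> a 0 * sqrt (jbr l)" and x: "x \<in> {0..T}"
  shows "a 0 / 2 \<le> a x"
proof (cases "a 0 \<le> a x")
  case True
  moreover have "0 < a 0" using flow x by auto
  ultimately show ?thesis by simp
next
  case False
  have a0: "0 < a 0" and ax: "0 < a x" using flow x by auto
  define B where "B = pi / 2 - arctan (Rmin (a 0))"
  have "8 * E * B \<le> 3 / 4 * (a 0)\<^sup>2"
  proof (rule drift_budget[OF l_pos a0 _ E(1,3,4)])
    show "0 \<le> m" using m_pos by simp
    have "\<delta>\<^sup>2 \<le> (a 0 * sqrt (jbr l))\<^sup>2"
      using D E(1,4) by (intro power_mono) auto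
    then show "\<delta>\<^sup>2 \<le> (a 0)\<^sup>2 * jbr l" by (simp add: power_mult_distrib jbr_def)
    have "0 < arctan (Rmin (a 0))" using Rmin_pos by simp
    then show "B \<le> 2" unfolding B_def using pi_less_4 by linarith
    show "B \<le> m / l + a 0 / sqrt l" using pi_half_minus_arctan_Rmin_le[OF a0] by (simp add: B_def)
  qed
  then have budget: "2 * (4 * E * B) \<le> 3 / 4 * (a 0)\<^sup>2" by simp
  have "\<bar>arctan_gap (\<theta> 0) (a 0)\<bar> \<le> B"
    using abs_arctan_gap_le[OF a0] by (simp add: B_def)
  then have "4 * E * (- B) \<le> 4 * E * arctan_gap (\<theta> 0) (a 0)"
    using E(1) by (intro mult_left_mono) (simp_all add: abs_le_iff)
  then have gap0: "- (4 * E * B) \<le> 4 * E * arctan_gap (\<theta> 0) (a 0)" by simp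
  have "arctan (Rmin (a 0)) \<le> arctan (Rmin (a x))"
    using Rmin_antimono[OF ax] False by (simp add: arctan_le_iff)
  then have "\<bar>arctan_gap (\<theta> x + a x * x) (a x)\<bar> \<le> B"
    using abs_arctan_gap_le[OF ax, of "\<theta> x + a x * x"] unfolding B_def by linarith
  then have gapx: "4 * E * arctan_gap (\<theta> x + a x * x) (a x) \<le> 4 * E * B"
    using E(1) by (intro mult_left_mono) (simp_all add: abs_le_iff)
  have "(a 0)\<^sup>2 / 4 \<le> (a x)\<^sup>2"
    using lyapunov_nondecreasing[OF lam E(1,2) F flow x] budget gap0 gapx by linarith
  then have "(a 0 / 2)\<^sup>2 \<le> (a x)\<^sup>2" by (simp add: power_divide)
  then show ?thesis by (rule power2_le_imp_le) (use ax in simp)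
qed

lemma stays_in_DD_half:
  fixes \<theta> a :: "real \<Rightarrow> real" and F :: "real \<Rightarrow> real \<Rightarrow> real"
  assumes lam: "0 < lam" and \<delta>: "0 < \<delta>" "\<delta> < 1"
    and E: "0 \<le> E" "E \<le> min (m / 4) (1 / (64 * (1 + m))) * \<delta> ^ 4"
    and F: "\<forall>t\<in>{0..T}. \<forall>r>0. lam * \<bar>F t r\<bar> \<le> E / (1 + r\<^sup>2)"
    and flow: "\<forall>t\<in>{0..T}. 0 < a t
          \<and> (\<theta> has_real_derivative
               (- lam * F t (Rtil m l t (\<theta> t) (a t)) * da_Rtil m l t (\<theta> t) (a t)))
               (at t within {0..T})
          \<and> (a has_real_derivative
               (lam * F t (Rtil m l t (\<theta> t) (a t)) * dth_Rtil m l t (\<theta> t) (a t)))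
               (at t within {0..T})"
    and D: "(\<theta> 0, a 0, l) \<in> DD \<delta>"
    and x: "x \<in> {0..T}"
  shows "(\<theta> x, a x, l) \<in> DD (\<delta> / 2)"
proof -
  have "min (m / 4) (1 / (64 * (1 + m))) * \<delta> ^ 4 \<le> m / 4 * \<delta> ^ 4"
    "min (m / 4) (1 / (64 * (1 + m))) * \<delta> ^ 4 \<le> 1 / (64 * (1 + m)) * \<delta> ^ 4"
    by (intro mult_right_mono; simp)+
  then have E1: "E \<le> m / 4 * \<delta> ^ 4" "E \<le> 1 / (64 * (1 + m)) * \<delta> ^ 4"
    using E(2) by linarith+
  have "m / 4 * \<delta> ^ 4 \<le> m / 4"
    using m_pos \<delta> by (intro mult_left_le) (auto simp: power_le_one)
  then have E_m: "E \<le> m / 4" using E1(1) by linarith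
  have "64 * ((1 + m) * E) \<le> \<delta> ^ 4" using E1(2) m_pos by (simp add: field_simps)
  moreover have "\<delta> ^ 4 \<le> \<delta>\<^sup>2" using \<delta> by (intro power_decreasing) auto
  ultimately have E_\<delta>: "64 * ((1 + m) * E) \<le> \<delta>\<^sup>2" by linarith
  moreover have "\<delta>\<^sup>2 \<le> \<delta>" using power_decreasing[of 1 2 \<delta>] \<delta> by simp
  moreover have "E \<le> (1 + m) * E"
    using mult_nonneg_nonneg[of m E] E(1) m_pos by (simp add: distrib_right)
  ultimately have "64 * E \<le> \<delta>" by linarith
  moreover have "\<delta> \<le> a 0 * sqrt (jbr l)" using D by (simp add: DD_def)
  ultimately have "a 0 / 2 \<le> a x"
    using amplitude_halving[OF lam E(1) E_m E_\<delta> _ F flow _ x] by blast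
  then have "a 0 / 2 * sqrt (jbr l) \<le> a x * sqrt (jbr l)"
    by (rule mult_right_mono) (simp add: jbr_def)
  moreover have "0 < a x" using flow x by auto
  ultimately show ?thesis using D l_pos by (simp add: DD_def)
qed

end

lemma energy_le_of_eps_le:
  fixes K q \<epsilon> \<delta> :: real
  assumes "0 \<le> K" "0 < q" "q \<le> 1" "0 < \<epsilon>" "\<epsilon> \<le> q / (1 + K) * \<delta>\<^sup>2"
  shows "K * \<epsilon>\<^sup>2 \<le> q * \<delta> ^ 4"
proof -
  have "\<epsilon>\<^sup>2 \<le> (q / (1 + K) * \<delta>\<^sup>2)\<^sup>2" using assms by (intro power_mono) auto
  then have "K * \<epsilon>\<^sup>2 \<le> K * (q / (1 + K) * \<delta>\<^sup>2)\<^sup>2" using assms(1) by (rule mult_left_mono)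
  also have "\<dots> = K / (1 + K) * (q / (1 + K)) * (q * \<delta> ^ 4)"
    using assms(1) by (simp add: field_simps power2_eq_square power4_eq_xxxx)
  also have "\<dots> \<le> 1 * 1 * (q * \<delta> ^ 4)"
    using assms by (intro mult_right_mono mult_mono) (auto simp: zero_le_power_eq_numeral)
  finally show ?thesis by simp
qed

lemma coeff_nonneg_of_abs_le:
  fixes F :: "real \<Rightarrow> real \<Rightarrow> real"
  assumes "0 < T" "0 < \<epsilon>" "\<forall>t\<in>{0..T}. \<forall>r>0. \<bar>F t r\<bar> \<le> C * \<epsilon>\<^sup>2 / (1 + r\<^sup>2 + t\<^sup>2)"
  shows "0 \<le> C"
proof -
  have "0 \<in> {0..T}" using assms(1) by simp
  then have "\<bar>F 0 1\<bar> \<le> C * \<epsilon>\<^sup>2 / (1 + 1\<^sup>2 + 0\<^sup>2)"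
    using assms(3) zero_less_one by blast
  then have "0 \<le> C * \<epsilon>\<^sup>2 / 2" using abs_ge_zero[of "F 0 1"] by simp
  then have "0 \<le> C * \<epsilon>\<^sup>2" by simp
  then show ?thesis using assms(2) by (simp add: zero_le_mult_iff)
qed

lemma scaled_abs_le_drop_time:
  fixes F :: "real \<Rightarrow> real \<Rightarrow> real"
  assumes "0 \<le> C" "0 < lam" "\<forall>t\<in>{0..T}. \<forall>r>0. \<bar>F t r\<bar> \<le> C * \<epsilon>\<^sup>2 / (1 + r\<^sup>2 + t\<^sup>2)"
  shows "\<forall>t\<in>{0..T}. \<forall>r>0. lam * \<bar>F t r\<bar> \<le> lam * C * \<epsilon>\<^sup>2 / (1 + r\<^sup>2)"
proof (intro ballI allI impI)
  fix t r :: real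
  assume "t \<in> {0..T}" "0 < r"
  then have "\<bar>F t r\<bar> \<le> C * \<epsilon>\<^sup>2 / (1 + r\<^sup>2 + t\<^sup>2)" using assms(3) by blast
  also have "\<dots> \<le> C * \<epsilon>\<^sup>2 / (1 + r\<^sup>2)"
    using assms(1) by (intro divide_left_mono) (auto simp: add_pos_nonneg)
  finally have "lam * \<bar>F t r\<bar> \<le> lam * (C * \<epsilon>\<^sup>2 / (1 + r\<^sup>2))"
    using assms(2) by (intro mult_left_mono) auto
  then show "lam * \<bar>F t r\<bar> \<le> lam * C * \<epsilon>\<^sup>2 / (1 + r\<^sup>2)" by simp
qed

theorem corollary4p2:
  fixes m lam C :: real
  assumes "0 < m" and "0 < lam"
  shows "\<exists>c>0. \<forall>(T::real) (\<epsilon>::real) (\<delta>::real) (l::real)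
            (F::real \<Rightarrow> real \<Rightarrow> real) (\<theta>::real \<Rightarrow> real) (a::real \<Rightarrow> real).
     0 < T \<and> 0 < \<epsilon> \<and> 0 < \<delta> \<and> \<delta> < 1 \<and> \<epsilon> \<le> c * \<delta>\<^sup>2 \<and> 0 < l
     \<and> continuous_on ({0..T} \<times> {0<..}) (\<lambda>(t, r). F t r)
     \<and> (\<forall>t\<in>{0..T}. \<forall>r>0. \<bar>F t r\<bar> \<le> C * \<epsilon>\<^sup>2 / (1 + r\<^sup>2 + t\<^sup>2))
     \<and> (\<forall>t\<in>{0..T}. 0 < a t
          \<and> (\<theta> has_real_derivative
               (- lam * F t (Rtil m l t (\<theta> t) (a t)) * da_Rtil m l t (\<theta> t) (a t)))
               (at t within {0..T})
          \<and> (a has_real_derivative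
               (lam * F t (Rtil m l t (\<theta> t) (a t)) * dth_Rtil m l t (\<theta> t) (a t)))
               (at t within {0..T}))
     \<and> (\<theta> 0, a 0, l) \<in> DD \<delta>
     \<longrightarrow> (\<forall>t\<in>{0..T}. (\<theta> t, a t, l) \<in> DD (\<delta> / 2))"
proof -
  \<comment> \<open>The bound \<open>m / 4\<close> controls the drift of \<open>Rmin\<close>, and \<open>1 / (64 (1 + m))\<close> the arctan term.\<close>
  define \<eta> where "\<eta> = min (m / 4) (1 / (64 * (1 + m)))"
  have \<eta>: "0 < \<eta>" "\<eta> \<le> 1" using assms(1) by (auto simp: \<eta>_def min_le_iff_disj)
  show ?thesis
  proof (intro exI[of _ "\<eta> / (1 + lam * \<bar>C\<bar>)"] conjI allI impI ballI, goal_cases)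
    case 1
    show ?case using \<eta> assms(2) by (simp add: add_pos_nonneg)
  next
    case (2 T \<epsilon> \<delta> l F \<theta> a t)
    then have C: "0 \<le> C" using coeff_nonneg_of_abs_le[of T \<epsilon> F C] by blast
    then have E: "lam * C * \<epsilon>\<^sup>2 \<le> \<eta> * \<delta> ^ 4"
      using energy_le_of_eps_le[of "lam * C" \<eta> \<epsilon> \<delta>] 2 \<eta> assms(2) by simp
    interpret hyperbolic_kepler m l using assms(1) 2 by unfold_locales blast+
    show ?case
      using 2 scaled_abs_le_drop_time[OF C assms(2), of T F \<epsilon>] C assms(2) E
      by (intro stays_in_DD_half[OF assms(2), of \<delta> "lam * C * \<epsilon>\<^sup>2" T F a \<theta> t])
         (simp_all add: \<eta>_def)
  qed
qed

end
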